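(* Let $G$ be a $1$-regular graph with $n$ vertices. Then the complement $\overline{G}$ is divergent if and only if $n\geq 6$.
   Context: All graphs are finite and simple. A complete in a graph is a set of pairwise adjacent vertices; a clique is a maximal complete. The clique graph $K(G)$ is the intersection graph of the cliques of $G$. Iterated clique graphs: $K^0(G)=G$, $K^n(G)=K(K^{n-1}(G))$ for $n\ge 1$. $G$ is convergent if the sequence $(K^n(G))_{n\ge0}$ contains only finitely many graphs up to isomorphism, and divergent otherwise. *)

theory Defs
  imports Main
begin

text \<open>Finite simple graphs whose vertices are natural numbers (every finite graph is
isomorphic to one of these; all notions below are isomorphism-invariant).\<close>

record ngraph =
  verts :: "nat set"
  adj :: "nat \<Rightarrow> nat \<Rightarrow> bool"

definition simple_graph :: "ngraph \<Rightarrow> bool" where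
  "simple_graph G \<longleftrightarrow> finite (verts G)
     \<and> (\<forall>u v. adj G u v \<longrightarrow> u \<in> verts G \<and> v \<in> verts G)
     \<and> (\<forall>u v. adj G u v \<longrightarrow> adj G v u)
     \<and> (\<forall>u. \<not> adj G u u)"

definition regular :: "nat \<Rightarrow> ngraph \<Rightarrow> bool" where
  "regular k G \<longleftrightarrow> (\<forall>v\<in>verts G. card {u\<in>verts G. adj G v u} = k)"

definition complement :: "ngraph \<Rightarrow> ngraph" where
  "complement G = \<lparr>verts = verts G,
     adj = (\<lambda>u v. u \<in> verts G \<and> v \<in> verts G \<and> u \<noteq> v \<and> \<not> adj G u v)\<rparr>"

definition complete_set :: "ngraph \<Rightarrow> nat set \<Rightarrow> bool" where
  "complete_set G S \<longleftrightarrow> S \<subseteq> verts G \<and> (\<forall>u\<in>S. \<forall>v\<in>S. u \<noteq> v \<longrightarrow> adj G u v)"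

definition clique :: "ngraph \<Rightarrow> nat set \<Rightarrow> bool" where
  "clique G S \<longleftrightarrow> complete_set G S \<and> (\<forall>T. complete_set G T \<and> S \<subseteq> T \<longrightarrow> T = S)"

text \<open>Injective coding of finite sets of naturals as naturals (binary representation),
used to name the vertices of the clique graph.\<close>
definition set_code :: "nat set \<Rightarrow> nat" where
  "set_code C = (\<Sum>x\<in>C. 2 ^ x)"

definition clique_graph :: "ngraph \<Rightarrow> ngraph" where
  "clique_graph G = \<lparr>verts = set_code ` {C. clique G C},
     adj = (\<lambda>a b. \<exists>C D. clique G C \<and> clique G D \<and> a = set_code C \<and> b = set_code D
                        \<and> C \<noteq> D \<and> C \<inter> D \<noteq> {})\<rparr>"

definition iter_clique_graph :: "nat \<Rightarrow> ngraph \<Rightarrow> ngraph" where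
  "iter_clique_graph n G = (clique_graph ^^ n) G"

definition graph_iso :: "ngraph \<Rightarrow> ngraph \<Rightarrow> bool" where
  "graph_iso G H \<longleftrightarrow> (\<exists>f. bij_betw f (verts G) (verts H)
     \<and> (\<forall>u\<in>verts G. \<forall>v\<in>verts G. adj G u v \<longleftrightarrow> adj H (f u) (f v)))"

definition convergent_graph :: "ngraph \<Rightarrow> bool" where
  "convergent_graph G \<longleftrightarrow> (\<exists>S. finite S \<and> (\<forall>n. \<exists>H\<in>S. graph_iso (iter_clique_graph n G) H))"

definition divergent_graph :: "ngraph \<Rightarrow> bool" where
  "divergent_graph G \<longleftrightarrow> \<not> convergent_graph G"

end

theory Submission imports Defs begin

text \<open>If \<open>G\<close> is a perfect matching with partner map \<open>p\<close>, its complement is the cocktail party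
graph: two vertices are adjacent unless they are equal or partners. Its cliques are exactly
the transversals of the pairs, so there are \<open>2^(n/2)\<close> of them, and two cliques meet unless one
is the \<open>p\<close>-image of the other. Hence the clique graph is again a cocktail party graph, on
\<open>2^(n/2)\<close> vertices. The vertex counts of the iterated clique graphs therefore follow
\<open>c \<mapsto> 2^(c/2)\<close>, which fixes \<open>c = 2, 4\<close> and strictly increases every \<open>c \<ge> 6\<close>; the empty graph
has a one-vertex clique graph.\<close>

definition pairing :: "nat set \<Rightarrow> (nat \<Rightarrow> nat) \<Rightarrow> bool" where
  "pairing V p \<longleftrightarrow> (\<forall>v\<in>V. p v \<in> V \<and> p v \<noteq> v \<and> p (p v) = v)"

definition transversal :: "nat set \<Rightarrow> (nat \<Rightarrow> nat) \<Rightarrow> nat set \<Rightarrow> bool" where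
  "transversal V p C \<longleftrightarrow> C \<subseteq> V \<and> (\<forall>v\<in>V. v \<in> C \<longleftrightarrow> p v \<notin> C)"

lemma pairingD:
  assumes "pairing V p" "v \<in> V"
  shows "p v \<in> V" "p v \<noteq> v" "p (p v) = v"
  using assms by (auto simp: pairing_def)

lemma pairing_cancel:
  assumes "pairing V p" "u \<in> V" "w \<in> V"
  shows "p u = w \<longleftrightarrow> u = p w"
  using assms by (metis pairingD(3))

lemma pairing_Diff_pair:
  assumes p: "pairing V p" and v: "v \<in> V"
  shows "pairing (V - {v, p v}) p"
  unfolding pairing_def
proof
  fix w assume w: "w \<in> V - {v, p v}"
  then have "p w \<noteq> v" "p w \<noteq> p v"
    using pairing_cancel[OF p] pairingD(1)[OF p] v by auto
  then show "p w \<in> V - {v, p v} \<and> p w \<noteq> w \<and> p (p w) = w"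
    using pairingD[OF p] w by auto
qed

lemma transversals_split_pair:
  assumes p: "pairing V p" and v: "v \<in> V"
  defines "X \<equiv> {C. transversal (V - {v, p v}) p C}"
  shows "{C. transversal V p C} = insert v ` X \<union> insert (p v) ` X"
proof -
  let ?W = "V - {v, p v}"
  have pW: "p w \<in> ?W" if "w \<in> ?W" for w
    using pairing_Diff_pair[OF p v] that unfolding pairing_def by blast
  note pv = pairingD[OF p v]
  show ?thesis
  proof (intro equalityI subsetI)
    fix C assume "C \<in> {C. transversal V p C}"
    then have C: "C \<subseteq> V" "\<And>u. u \<in> V \<Longrightarrow> u \<in> C \<longleftrightarrow> p u \<notin> C"
      by (auto simp: transversal_def)
    have "u \<in> C - {v, p v} \<longleftrightarrow> p u \<notin> C - {v, p v}" if u: "u \<in> ?W" for u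
      using C(2) pW[OF u] u by blast
    then have "transversal ?W p (C - {v, p v})"
      unfolding transversal_def using C(1) by blast
    moreover have "C = insert v (C - {v, p v}) \<or> C = insert (p v) (C - {v, p v})"
      using C(2)[OF v] by auto
    ultimately show "C \<in> insert v ` X \<union> insert (p v) ` X"
      unfolding X_def by blast
  next
    fix C assume "C \<in> insert v ` X \<union> insert (p v) ` X"
    then obtain T w where T: "transversal ?W p T" and w: "w = v \<or> w = p v" and C: "C = insert w T"
      unfolding X_def by blast
    have TW: "T \<subseteq> ?W" and Tc: "\<And>u. u \<in> ?W \<Longrightarrow> u \<in> T \<longleftrightarrow> p u \<notin> T"
      using T by (auto simp: transversal_def)
    have "u \<in> C \<longleftrightarrow> p u \<notin> C" if u: "u \<in> V" for u
    proof (cases "u \<in> ?W")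
      case True
      then have "u \<notin> {v, p v}" "p u \<notin> {v, p v}" using pW[OF True] by auto
      then show ?thesis using Tc[OF True] C w by auto
    next
      case False
      then have "u = v \<or> u = p v" using u by blast
      then show ?thesis using C w TW pv by auto
    qed
    moreover have "C \<subseteq> V" using TW w C pv v by auto
    ultimately show "C \<in> {C. transversal V p C}" by (simp add: transversal_def)
  qed
qed

lemma card_transversals:
  assumes "finite V" "pairing V p"
  shows "card {C. transversal V p C} = 2 ^ (card V div 2) \<and> even (card V)"
  using assms
proof (induction "card V" arbitrary: V rule: less_induct)
  case less
  show ?case
  proof (cases "V = {}")
    case True
    then have "{C. transversal V p C} = {{}}" by (auto simp: transversal_def)
    then show ?thesis using True by simp
  next
    case False
    then obtain v where v: "v \<in> V" by blast
    define W where "W = V - {v, p v}"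
    define X where "X = {C. transversal W p C}"
    note pv = pairingD[OF less.prems(2) v]
    have cardV: "card V = card W + 2"
      using pv v less.prems(1) card_mono[OF less.prems(1), of "{v, p v}"]
      unfolding W_def by (subst card_Diff_subset) auto
    have "finite W" "pairing W p"
      using less.prems pairing_Diff_pair[OF less.prems(2) v] unfolding W_def by auto
    then have IH: "card X = 2 ^ (card W div 2) \<and> even (card W)"
      using less.hyps[of W] cardV unfolding X_def by linarith
    have XW: "T \<subseteq> W" if "T \<in> X" for T
      using that unfolding X_def transversal_def by blast
    have vW: "v \<notin> W" "p v \<notin> W" by (auto simp: W_def)
    have "finite X"
      using finite_subset[of X "Pow W"] XW \<open>finite W\<close> by blast
    moreover have "inj_on (insert v) X" "inj_on (insert (p v)) X"
      unfolding inj_on_def using XW vW by (metis insert_ident subsetD)+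
    moreover have "insert v ` X \<inter> insert (p v) ` X = {}"
      using XW vW pv by blast
    ultimately have "card {C. transversal V p C} = card X + card X"
      using transversals_split_pair[OF less.prems(2) v]
      unfolding W_def[symmetric] X_def[symmetric]
      by (simp add: card_Un_disjoint card_image)
    then show ?thesis using IH cardV by simp
  qed
qed

lemma transversal_image:
  assumes p: "pairing V p" and C: "transversal V p C"
  shows "transversal V p (p ` C)"
  unfolding transversal_def
proof
  have CV: "C \<subseteq> V" using C unfolding transversal_def by blast
  then show "p ` C \<subseteq> V" using pairingD(1)[OF p] by blast
  have mem: "v \<in> p ` C \<longleftrightarrow> p v \<in> C" if v: "v \<in> V" for v
  proof
    assume "v \<in> p ` C"
    then obtain c where "c \<in> C" "v = p c" by blast
    then show "p v \<in> C" using CV pairingD(3)[OF p, of c] by auto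
  next
    assume "p v \<in> C"
    then show "v \<in> p ` C" using pairingD(3)[OF p v] by (metis imageI)
  qed
  show "\<forall>v\<in>V. v \<in> p ` C \<longleftrightarrow> p v \<notin> p ` C"
  proof
    fix v assume v: "v \<in> V"
    have "p v \<in> C \<longleftrightarrow> p (p v) \<notin> C"
      using C pairingD(1)[OF p v] unfolding transversal_def by blast
    then show "v \<in> p ` C \<longleftrightarrow> p v \<notin> p ` C"
      using mem[OF v] mem[OF pairingD(1)[OF p v]] by blast
  qed
qed

lemma transversal_image_image:
  assumes "pairing V p" "transversal V p C"
  shows "p ` p ` C = C"
proof -
  have "p (p c) = c" if "c \<in> C" for c
    using that assms(2) pairingD(3)[OF assms(1)] unfolding transversal_def by blast
  then show ?thesis by (simp add: image_image)
qed

lemma transversals_disjoint_iff: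
  assumes p: "pairing V p" and C: "transversal V p C" and D: "transversal V p D"
  shows "C \<inter> D = {} \<longleftrightarrow> C = p ` D"
proof
  assume disj: "C \<inter> D = {}"
  have "c \<in> p ` D" if "c \<in> C" for c
  proof -
    have c: "c \<in> V" "c \<notin> D" using that C disj unfolding transversal_def by blast+
    then have "p c \<in> D" using D unfolding transversal_def by blast
    then show ?thesis using pairingD(3)[OF p c(1)] by (metis imageI)
  qed
  moreover have "p d \<in> C" if "d \<in> D" for d
    using that disj C D unfolding transversal_def by blast
  ultimately show "C = p ` D" by blast
next
  assume "C = p ` D"
  then show "C \<inter> D = {}" using D unfolding transversal_def by blast
qed

lemma transversal_image_neq:
  assumes "pairing V p" "transversal V p C" "V \<noteq> {}"
  shows "p ` C \<noteq> C"
proof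
  assume "p ` C = C"
  then have "C = {}" using transversals_disjoint_iff[OF assms(1,2,2)] by simp
  then show False using assms(2,3) unfolding transversal_def by blast
qed

definition cocktail_party :: "ngraph \<Rightarrow> (nat \<Rightarrow> nat) \<Rightarrow> bool" where
  "cocktail_party G p \<longleftrightarrow> finite (verts G) \<and> pairing (verts G) p \<and>
     (\<forall>u v. adj G u v \<longleftrightarrow> u \<in> verts G \<and> v \<in> verts G \<and> u \<noteq> v \<and> u \<noteq> p v)"

lemma cocktail_party_complete_set_iff:
  assumes "cocktail_party G p"
  shows "complete_set G S \<longleftrightarrow> S \<subseteq> verts G \<and> (\<forall>u\<in>S. p u \<notin> S)"
proof -
  have adj: "adj G u v \<longleftrightarrow> u \<in> verts G \<and> v \<in> verts G \<and> u \<noteq> v \<and> u \<noteq> p v" for u v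
    using assms by (simp add: cocktail_party_def)
  have p: "pairing (verts G) p" using assms by (simp add: cocktail_party_def)
  show ?thesis
  proof
    assume S: "complete_set G S"
    have "p u \<notin> S" if u: "u \<in> S" for u
    proof
      assume pu: "p u \<in> S"
      have uV: "u \<in> verts G" using S u unfolding complete_set_def by blast
      then have "adj G (p u) u" using S u pu pairingD(2)[OF p uV] unfolding complete_set_def by blast
      then show False using adj pairingD(3)[OF p uV] by simp
    qed
    then show "S \<subseteq> verts G \<and> (\<forall>u\<in>S. p u \<notin> S)" using S unfolding complete_set_def by blast
  next
    assume "S \<subseteq> verts G \<and> (\<forall>u\<in>S. p u \<notin> S)"
    then show "complete_set G S" unfolding complete_set_def adj by blast
  qed
qed

lemma cocktail_party_clique_iff:
  assumes G: "cocktail_party G p"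
  shows "clique G C \<longleftrightarrow> transversal (verts G) p C"
proof -
  note cs = cocktail_party_complete_set_iff[OF G]
  have p: "pairing (verts G) p" using G by (simp add: cocktail_party_def)
  show ?thesis
  proof
    assume c: "clique G C"
    then have C: "C \<subseteq> verts G" "\<forall>u\<in>C. p u \<notin> C" unfolding clique_def cs by auto
    have "v \<in> C" if v: "v \<in> verts G" "p v \<notin> C" for v
    proof -
      have "p u \<noteq> v" if u: "u \<in> C" for u
      proof
        assume "p u = v"
        then have "p v = u" using pairingD(3)[OF p] u C(1) by blast
        then show False using u v(2) by blast
      qed
      then have "complete_set G (insert v C)"
        unfolding cs using C v pairingD(2)[OF p v(1)] by auto
      then show ?thesis using c unfolding clique_def by blast
    qed
    then show "transversal (verts G) p C" unfolding transversal_def using C by blast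
  next
    assume "transversal (verts G) p C"
    then have C: "C \<subseteq> verts G" "\<And>v. v \<in> verts G \<Longrightarrow> v \<in> C \<longleftrightarrow> p v \<notin> C"
      by (auto simp: transversal_def)
    have "complete_set G C" unfolding cs using C by blast
    moreover have "T = C" if T: "complete_set G T" "C \<subseteq> T" for T
    proof -
      have "T \<subseteq> verts G" "\<forall>u\<in>T. p u \<notin> T" using T(1) unfolding cs by auto
      then show ?thesis using C T(2) by blast
    qed
    ultimately show "clique G C" unfolding clique_def by blast
  qed
qed

lemma bit_set_code_iff:
  assumes "finite C"
  shows "bit (set_code C) n \<longleftrightarrow> n \<in> C"
  using assms
proof (induction C arbitrary: n rule: finite_induct)
  case empty
  then show ?case by (simp add: set_code_def)
next
  case (insert x F)
  have "set_code (insert x F) = 2 ^ x + set_code F"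
    using insert by (simp add: set_code_def)
  moreover have "bit (2 ^ x + set_code F) n \<longleftrightarrow> bit ((2::nat) ^ x) n \<or> bit (set_code F) n"
    by (rule bit_disjunctive_add_iff) (use insert in \<open>auto simp: bit_exp_iff\<close>)
  ultimately show ?case using insert by (auto simp: bit_exp_iff)
qed

lemma bits_set_code:
  assumes "finite C"
  shows "{i. bit (set_code C) i} = C"
  using bit_set_code_iff[OF assms] by blast

lemma inj_on_set_code: "inj_on set_code (Collect finite)"
  by (rule inj_on_inverseI[where g = "\<lambda>a. {i. bit a i}"]) (simp add: bits_set_code)

definition clique_pairing :: "(nat \<Rightarrow> nat) \<Rightarrow> nat \<Rightarrow> nat" where
  "clique_pairing p a = set_code (p ` {i. bit a i})"

lemma verts_clique_graph_cocktail_party: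
  assumes "cocktail_party G p"
  shows "verts (clique_graph G) = set_code ` {C. transversal (verts G) p C}"
  using cocktail_party_clique_iff[OF assms] by (simp add: clique_graph_def)

lemma card_verts_clique_graph_cocktail_party:
  assumes G: "cocktail_party G p"
  shows "card (verts (clique_graph G)) = 2 ^ (card (verts G) div 2)"
proof -
  have "inj_on set_code {C. transversal (verts G) p C}"
    using G inj_on_set_code unfolding cocktail_party_def transversal_def
    by (auto intro: inj_on_subset finite_subset)
  then show ?thesis
    using card_transversals G
    by (simp add: verts_clique_graph_cocktail_party[OF G] card_image cocktail_party_def)
qed

lemma clique_graph_cocktail_party:
  assumes G: "cocktail_party G p" and ne: "verts G \<noteq> {}"
  shows "cocktail_party (clique_graph G) (clique_pairing p)"
proof -
  define Tr where "Tr = {C. transversal (verts G) p C}"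
  have fV: "finite (verts G)" and p: "pairing (verts G) p"
    using G unfolding cocktail_party_def by blast+
  have VK: "verts (clique_graph G) = set_code ` Tr"
    unfolding Tr_def by (rule verts_clique_graph_cocktail_party[OF G])
  have fin: "finite C" if "C \<in> Tr" for C
    using that fV finite_subset unfolding Tr_def transversal_def by blast
  have code_eq: "set_code C = set_code D \<longleftrightarrow> C = D" if "C \<in> Tr" "D \<in> Tr" for C D
    using inj_on_set_code fin that unfolding inj_on_def by blast
  have pTr: "p ` C \<in> Tr" if "C \<in> Tr" for C
    using that transversal_image[OF p] unfolding Tr_def by blast
  have lift: "clique_pairing p (set_code C) = set_code (p ` C)" if "C \<in> Tr" for C
    using bits_set_code[OF fin[OF that]] by (simp add: clique_pairing_def)
  have pairing_K: "pairing (set_code ` Tr) (clique_pairing p)"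
    unfolding pairing_def
  proof
    fix a assume "a \<in> set_code ` Tr"
    then obtain C where C: "C \<in> Tr" "a = set_code C" by blast
    have moved: "p ` C \<noteq> C" and inv: "p ` p ` C = C"
      using transversal_image_neq[OF p _ ne] transversal_image_image[OF p] C(1)
      unfolding Tr_def by auto
    have img: "clique_pairing p a = set_code (p ` C)"
      using lift C by simp
    show "clique_pairing p a \<in> set_code ` Tr \<and> clique_pairing p a \<noteq> a
        \<and> clique_pairing p (clique_pairing p a) = a"
    proof (intro conjI)
      show "clique_pairing p a \<in> set_code ` Tr" using img pTr[OF C(1)] by blast
      show "clique_pairing p a \<noteq> a" using img C(2) moved code_eq[OF pTr[OF C(1)] C(1)] by simp
      show "clique_pairing p (clique_pairing p a) = a"
        using img lift[OF pTr[OF C(1)]] inv C(2) by simp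
    qed
  qed
  have meet: "C \<noteq> D \<and> C \<inter> D \<noteq> {} \<longleftrightarrow>
      set_code C \<noteq> set_code D \<and> set_code C \<noteq> clique_pairing p (set_code D)"
    if "C \<in> Tr" "D \<in> Tr" for C D
    using transversals_disjoint_iff[OF p, of C D] that lift[OF that(2)]
      code_eq[OF that] code_eq[OF that(1) pTr[OF that(2)]]
    unfolding Tr_def by simp
  have "adj (clique_graph G) a b \<longleftrightarrow>
      (\<exists>C\<in>Tr. a = set_code C \<and> (\<exists>D\<in>Tr. b = set_code D \<and> C \<noteq> D \<and> C \<inter> D \<noteq> {}))" for a b
    unfolding clique_graph_def Tr_def by (auto simp: cocktail_party_clique_iff[OF G])
  then have "adj (clique_graph G) a b \<longleftrightarrow> a \<in> set_code ` Tr \<and> b \<in> set_code ` Tr \<and> a \<noteq> b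
      \<and> a \<noteq> clique_pairing p b" for a b
    using meet by auto
  moreover have "finite Tr"
    using fV finite_subset[of Tr "Pow (verts G)"] unfolding Tr_def transversal_def by blast
  ultimately show ?thesis
    using pairing_K unfolding cocktail_party_def VK by simp
qed

lemma iter_clique_graph_0 [simp]: "iter_clique_graph 0 G = G"
  by (simp add: iter_clique_graph_def)

lemma iter_clique_graph_Suc [simp]:
  "iter_clique_graph (Suc n) G = clique_graph (iter_clique_graph n G)"
  by (simp add: iter_clique_graph_def)

lemma iter_clique_graph_cocktail_party:
  assumes "cocktail_party G p" "verts G \<noteq> {}"
  shows "\<exists>q. cocktail_party (iter_clique_graph n G) q \<and> verts (iter_clique_graph n G) \<noteq> {}
           \<and> card (verts (iter_clique_graph n G)) = ((\<lambda>c. 2 ^ (c div 2)) ^^ n) (card (verts G))"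
proof (induction n)
  case 0
  then show ?case using assms by auto
next
  case (Suc n)
  then obtain q where q: "cocktail_party (iter_clique_graph n G) q" "verts (iter_clique_graph n G) \<noteq> {}"
    "card (verts (iter_clique_graph n G)) = ((\<lambda>c. 2 ^ (c div 2)) ^^ n) (card (verts G))"
    by blast
  have "card (verts (iter_clique_graph (Suc n) G)) = ((\<lambda>c. 2 ^ (c div 2)) ^^ Suc n) (card (verts G))"
    using card_verts_clique_graph_cocktail_party[OF q(1)] q(3) by simp
  moreover from this have "verts (iter_clique_graph (Suc n) G) \<noteq> {}" by auto
  ultimately show ?case
    using clique_graph_cocktail_party[OF q(1,2)] by auto
qed

lemma exists_graph_iso_on_initial_segment:
  assumes "finite (verts H)"
  shows "\<exists>R \<subseteq> {..<card (verts H)} \<times> {..<card (verts H)}.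
           graph_iso H \<lparr>verts = {..<card (verts H)}, adj = (\<lambda>u v. (u, v) \<in> R)\<rparr>"
proof -
  define k where "k = card (verts H)"
  obtain f where f: "bij_betw f (verts H) {..<k}"
    using ex_bij_betw_finite_nat[OF assms] unfolding k_def atLeast0LessThan by blast
  define R where "R = {(f u, f v) | u v. u \<in> verts H \<and> v \<in> verts H \<and> adj H u v}"
  have inj: "inj_on f (verts H)" and img: "f ` verts H = {..<k}"
    using f unfolding bij_betw_def by auto
  have "R \<subseteq> {..<k} \<times> {..<k}" unfolding R_def using img by auto
  moreover have "(f u, f v) \<in> R \<longleftrightarrow> adj H u v" if "u \<in> verts H" "v \<in> verts H" for u v
    using that inj unfolding R_def inj_on_def by blast
  then have "graph_iso H \<lparr>verts = {..<k}, adj = (\<lambda>u v. (u, v) \<in> R)\<rparr>"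
    unfolding graph_iso_def using f by auto
  ultimately show ?thesis unfolding k_def by blast
qed

lemma convergent_if_card_bounded:
  assumes "\<And>n. finite (verts (iter_clique_graph n G)) \<and> card (verts (iter_clique_graph n G)) \<le> B"
  shows "convergent_graph G"
proof -
  define S where "S = (\<lambda>(k, R). \<lparr>verts = {..<k}, adj = (\<lambda>u v. (u, v) \<in> R)\<rparr>)
    ` ({..B} \<times> Pow ({..<B} \<times> {..<B}))"
  have "\<exists>H'\<in>S. graph_iso (iter_clique_graph n G) H'" for n
  proof -
    let ?k = "card (verts (iter_clique_graph n G))"
    obtain R where R: "R \<subseteq> {..<?k} \<times> {..<?k}"
      and iso: "graph_iso (iter_clique_graph n G) \<lparr>verts = {..<?k}, adj = (\<lambda>u v. (u, v) \<in> R)\<rparr>"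
      using exists_graph_iso_on_initial_segment assms by blast
    have "?k \<le> B" using assms[of n] by blast
    then have "(?k, R) \<in> {..B} \<times> Pow ({..<B} \<times> {..<B})" using R by auto
    then show ?thesis unfolding S_def using iso by force
  qed
  moreover have "finite S" unfolding S_def by simp
  ultimately show ?thesis unfolding convergent_graph_def by blast
qed

lemma divergent_if_card_unbounded:
  assumes "\<And>n. card (verts (iter_clique_graph n G)) \<ge> n"
  shows "divergent_graph G"
  unfolding divergent_graph_def convergent_graph_def
proof
  assume "\<exists>S. finite S \<and> (\<forall>n. \<exists>H\<in>S. graph_iso (iter_clique_graph n G) H)"
  then obtain S where S: "finite S" "\<And>n. \<exists>H\<in>S. graph_iso (iter_clique_graph n G) H" by blast
  define B where "B = Max (insert 0 ((\<lambda>H. card (verts H)) ` S))"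
  obtain H where H: "H \<in> S" "graph_iso (iter_clique_graph (Suc B) G) H" using S(2) by blast
  have "card (verts (iter_clique_graph (Suc B) G)) = card (verts H)"
    using H(2) unfolding graph_iso_def by (metis bij_betw_same_card)
  also have "\<dots> \<le> B" unfolding B_def using S(1) H(1) by (intro Max_ge) auto
  finally show False using assms[of "Suc B"] by simp
qed

lemma verts_clique_graph_card_le_1:
  assumes "finite (verts H)" "card (verts H) \<le> 1"
  shows "verts (clique_graph H) = {set_code (verts H)}"
proof -
  have "u = v" if "u \<in> verts H" "v \<in> verts H" for u v
    using assms that card_le_Suc0_iff_eq[of "verts H"] by simp
  then have "complete_set H S \<longleftrightarrow> S \<subseteq> verts H" for S
    unfolding complete_set_def by blast
  then have "{C. clique H C} = {verts H}" unfolding clique_def by blast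
  then show ?thesis unfolding clique_graph_def by simp
qed

lemma card_verts_iter_clique_graph_le_1:
  assumes "finite (verts H)" "card (verts H) \<le> 1"
  shows "finite (verts (iter_clique_graph n H)) \<and> card (verts (iter_clique_graph n H)) \<le> 1"
  by (induction n) (use assms verts_clique_graph_card_le_1 in auto)

lemma double_plus_two_le_two_pow: "3 \<le> k \<Longrightarrow> 2 * k + 2 \<le> (2::nat) ^ k"
  by (induction k rule: nat_induct_at_least) simp_all

lemma le_funpow_two_pow_half:
  assumes "6 \<le> c"
  shows "c + n \<le> ((\<lambda>c. 2 ^ (c div 2)) ^^ n) c"
proof (induction n)
  case 0
  then show ?case by simp
next
  case (Suc n)
  let ?m = "((\<lambda>c. 2 ^ (c div 2)) ^^ n) c :: nat"
  have "2 * (?m div 2) + 2 \<le> 2 ^ (?m div 2)"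
    using Suc assms by (intro double_plus_two_le_two_pow) simp
  then show ?case using Suc by simp
qed

lemma divergent_cocktail_party_iff:
  assumes G: "cocktail_party G p"
  shows "divergent_graph G \<longleftrightarrow> 6 \<le> card (verts G)"
proof (cases "verts G = {}")
  case True
  then have "convergent_graph G"
    using card_verts_iter_clique_graph_le_1 by (intro convergent_if_card_bounded[where B = 1]) simp
  then show ?thesis using True by (simp add: divergent_graph_def)
next
  case False
  let ?c = "card (verts G)"
  have iter: "card (verts (iter_clique_graph n G)) = ((\<lambda>c. 2 ^ (c div 2)) ^^ n) ?c"
    and fin: "finite (verts (iter_clique_graph n G))" for n
    using iter_clique_graph_cocktail_party[OF G False] unfolding cocktail_party_def by blast+
  show ?thesis
  proof (cases "6 \<le> ?c")
    case True
    then have "divergent_graph G"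
      using le_funpow_two_pow_half iter by (intro divergent_if_card_unbounded) (metis le_add2 order_trans)
    then show ?thesis using True by simp
  next
    case small: False
    have "even ?c" "?c \<noteq> 0"
      using card_transversals G False unfolding cocktail_party_def by auto
    then have "?c = 2 \<or> ?c = 4" using small by presburger
    then have "((\<lambda>c. 2 ^ (c div 2)) ^^ n) ?c = ?c" for n
      by (induction n) auto
    then have "convergent_graph G"
      using iter fin by (intro convergent_if_card_bounded[where B = ?c]) simp
    then show ?thesis using small by (simp add: divergent_graph_def)
  qed
qed

lemma complement_regular_1_cocktail_party:
  assumes G: "simple_graph G" and reg: "regular 1 G"
  shows "cocktail_party (complement G) (\<lambda>u. THE w. adj G u w)"
proof -
  define p where "p u = (THE w. adj G u w)" for u
  have inV: "u \<in> verts G \<and> v \<in> verts G" and sym: "adj G v u" if "adj G u v" for u v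
    using G that unfolding simple_graph_def by blast+
  have irrefl: "\<not> adj G u u" for u using G unfolding simple_graph_def by blast
  have partner: "adj G u v \<longleftrightarrow> v = p u" if u: "u \<in> verts G" for u v
  proof -
    obtain x where x: "{w \<in> verts G. adj G u w} = {x}"
      using reg u unfolding regular_def by (metis card_1_singletonE)
    then have "adj G u = (\<lambda>w. w = x)" using inV by blast
    then show ?thesis unfolding p_def by simp
  qed
  have "pairing (verts G) p"
    unfolding pairing_def using partner inV sym irrefl by metis
  moreover have "adj G u v \<longleftrightarrow> u = p v" if "u \<in> verts G" "v \<in> verts G" for u v
    using partner sym that by metis
  then have "adj (complement G) u v \<longleftrightarrow> u \<in> verts G \<and> v \<in> verts G \<and> u \<noteq> v \<and> u \<noteq> p v"
    for u v
    unfolding complement_def by auto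
  moreover have "finite (verts G)" using G unfolding simple_graph_def by blast
  ultimately have "cocktail_party (complement G) p"
    unfolding cocktail_party_def by (simp add: complement_def)
  then show ?thesis unfolding p_def .
qed

theorem mainTheorem1:
  fixes G :: ngraph and n :: nat
  assumes "simple_graph G"
    and "regular 1 G"
    and "card (verts G) = n"
  shows "divergent_graph (complement G) \<longleftrightarrow> n \<ge> 6"
proof -
  have "verts (complement G) = verts G" by (simp add: complement_def)
  then show ?thesis
    using divergent_cocktail_party_iff[OF complement_regular_1_cocktail_party[OF assms(1,2)]] assms(3)
    by simp
qed

end
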